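(* Let $\mathscr C$ be an embedded circle pattern for a graph $G$ and an admissible labelling $\alpha:E(G)\to[\alpha_0,\pi)$ with $0<\alpha_0\le\pi/2$, with radius function $r$. Define conductances $\mu([v_0,v_1])=\frac{\sin\alpha([v_0,v_1])}{\cosh(\log r(v_1)-\log r(v_0))-\cos\alpha([v_0,v_1])}$. Then there is a constant $C_5=C_5(\alpha_0)$ such that $\sum_{e=[v,w]}\mu(e)\le C_5$ for all interior vertices $v\in V$, the sum being over all edges incident to $v$.
   Context: $G$ is the graph on the white vertices of a b-quad-graph (a strongly regular cell decomposition into quadrilaterals with bipartite 1-skeleton), adjacent iff incident to a common face. Admissible labelling: at each interior black vertex the labels of incident faces sum to $2\pi$. A circle pattern: circles $\mathscr C(v)$ of radius $r(v)$ such that circles of adjacent vertices intersect with exterior intersection angle $\alpha$ (angle at an intersection point between the radii to the two centers), together with equally oriented kites formed by the two centers and the two intersection points, locally isomorphic to the b-quad-graph at interior vertices; embedded means the kites have disjoint interiors and meet in an edge/vertex iff the corresponding faces do. (The conductance equals the ratio of the distance between the two intersection points to the distance between the two centers.) *)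

theory Defs
  imports "HOL-Analysis.Analysis"
begin

text \<open>A face (quadrilateral) of the b-quad-graph is recorded as the tuple
  (w1, b1, w2, b2) of its vertices in cyclic order (along the orientation of
  the surface): w1, w2 are the white vertices, b1, b2 the black vertices.\<close>

type_synonym face = "nat \<times> nat \<times> nat \<times> nat"

definition fw1 :: "face \<Rightarrow> nat" where "fw1 f = fst f"
definition fb1 :: "face \<Rightarrow> nat" where "fb1 f = fst (snd f)"
definition fw2 :: "face \<Rightarrow> nat" where "fw2 f = fst (snd (snd f))"
definition fb2 :: "face \<Rightarrow> nat" where "fb2 f = snd (snd (snd f))"

definition face_verts :: "face \<Rightarrow> nat set" where
  "face_verts f = {fw1 f, fb1 f, fw2 f, fb2 f}"

definition face_dedges :: "face \<Rightarrow> (nat \<times> nat) set" where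
  "face_dedges f = {(fw1 f, fb1 f), (fb1 f, fw2 f), (fw2 f, fb2 f), (fb2 f, fw1 f)}"

definition face_edges :: "face \<Rightarrow> nat set set" where
  "face_edges f = {{fw1 f, fb1 f}, {fb1 f, fw2 f}, {fw2 f, fb2 f}, {fb2 f, fw1 f}}"

definition white_vertices :: "face set \<Rightarrow> nat set" where
  "white_vertices F = (\<Union>f\<in>F. {fw1 f, fw2 f})"

definition black_vertices :: "face set \<Rightarrow> nat set" where
  "black_vertices F = (\<Union>f\<in>F. {fb1 f, fb2 f})"

definition b_quad_graph :: "face set \<Rightarrow> bool" where
  "b_quad_graph F \<longleftrightarrow>
     F \<noteq> {} \<and>
     \<comment> \<open>quadrilaterals with four distinct vertices\<close>
     (\<forall>f\<in>F. distinct [fw1 f, fb1 f, fw2 f, fb2 f]) \<and>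
     \<comment> \<open>bipartite colouring: no vertex is both white and black\<close>
     white_vertices F \<inter> black_vertices F = {} \<and>
     \<comment> \<open>strong regularity: two distinct faces meet in nothing, a vertex or an edge\<close>
     (\<forall>f\<in>F. \<forall>g\<in>F. f \<noteq> g \<longrightarrow>
        face_verts f \<inter> face_verts g = {} \<or>
        (\<exists>x. face_verts f \<inter> face_verts g = {x}) \<or>
        (\<exists>e\<in>face_edges f \<inter> face_edges g. face_verts f \<inter> face_verts g = e)) \<and>
     \<comment> \<open>surface: each edge lies in at most two faces\<close>
     (\<forall>f\<in>F. \<forall>g\<in>F. \<forall>h\<in>F. \<forall>e. e \<in> face_edges f \<and> e \<in> face_edges g \<and> e \<in> face_edges h
        \<longrightarrow> f = g \<or> g = h \<or> f = h) \<and>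
     \<comment> \<open>coherent orientation: a common edge is traversed oppositely\<close>
     (\<forall>f\<in>F. \<forall>g\<in>F. f \<noteq> g \<longrightarrow> face_dedges f \<inter> face_dedges g = {})"

text \<open>Interior vertex: the faces incident to x form a single closed cycle
  (the link of x is a circle), consecutive faces sharing an edge incident to x.\<close>
definition faces_at :: "face set \<Rightarrow> nat \<Rightarrow> face set" where
  "faces_at F x = {f\<in>F. x \<in> face_verts f}"

definition interior_vertex :: "face set \<Rightarrow> nat \<Rightarrow> bool" where
  "interior_vertex F x \<longleftrightarrow>
     (\<exists>fs. distinct fs \<and> length fs \<ge> 3 \<and> set fs = faces_at F x \<and>
        (\<forall>i<length fs. \<exists>y. {x, y} \<in> face_edges (fs ! i) \<and>
                            {x, y} \<in> face_edges (fs ! ((i + 1) mod length fs))))"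

text \<open>Admissible labelling (labels indexed by faces = edges of G): at each
  interior black vertex the labels of the incident faces sum to 2 pi.\<close>
definition admissible :: "face set \<Rightarrow> (face \<Rightarrow> real) \<Rightarrow> bool" where
  "admissible F \<alpha> \<longleftrightarrow>
     (\<forall>b\<in>black_vertices F. interior_vertex F b \<longrightarrow> (\<Sum>f\<in>faces_at F b. \<alpha> f) = 2 * pi)"

definition angle_at :: "complex \<Rightarrow> complex \<Rightarrow> complex \<Rightarrow> real" where
  "angle_at q a c = arccos (inner (a - q) (c - q) / (norm (a - q) * norm (c - q)))"

text \<open>Positions: z maps white vertices to circle centres and black vertices to
  intersection points. The kite of a face is the union of its two triangles.\<close>
definition kite :: "(nat \<Rightarrow> complex) \<Rightarrow> face \<Rightarrow> complex set" where
  "kite z f = convex hull {z (fw1 f), z (fb1 f), z (fw2 f)}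
              \<union> convex hull {z (fw1 f), z (fb2 f), z (fw2 f)}"

definition cross2 :: "complex \<Rightarrow> complex \<Rightarrow> real" where
  "cross2 a b = Im (cnj a * b)"

definition kite_signed_area :: "(nat \<Rightarrow> complex) \<Rightarrow> face \<Rightarrow> real" where
  "kite_signed_area z f =
     (cross2 (z (fw1 f)) (z (fb1 f)) + cross2 (z (fb1 f)) (z (fw2 f)) +
      cross2 (z (fw2 f)) (z (fb2 f)) + cross2 (z (fb2 f)) (z (fw1 f))) / 2"

text \<open>Circle pattern: circles with centre z v and radius r v for white v;
  for each face (v, b, w, b') the circles of v and w intersect in the two
  distinct points z b, z b' with intersection angle alpha f (angle at an
  intersection point between the radii to the two centres); the kites are
  equally oriented and locally (at interior vertices) the kites of the
  incident faces cover a neighbourhood, as in the b-quad-graph.\<close>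
definition circle_pattern ::
  "face set \<Rightarrow> (face \<Rightarrow> real) \<Rightarrow> (nat \<Rightarrow> real) \<Rightarrow> (nat \<Rightarrow> complex) \<Rightarrow> bool" where
  "circle_pattern F \<alpha> r z \<longleftrightarrow>
     (\<forall>v\<in>white_vertices F. r v > 0) \<and>
     (\<forall>f\<in>F.
        dist (z (fb1 f)) (z (fw1 f)) = r (fw1 f) \<and> dist (z (fb1 f)) (z (fw2 f)) = r (fw2 f) \<and>
        dist (z (fb2 f)) (z (fw1 f)) = r (fw1 f) \<and> dist (z (fb2 f)) (z (fw2 f)) = r (fw2 f) \<and>
        z (fb1 f) \<noteq> z (fb2 f) \<and>
        angle_at (z (fb1 f)) (z (fw1 f)) (z (fw2 f)) = \<alpha> f \<and>
        angle_at (z (fb2 f)) (z (fw1 f)) (z (fw2 f)) = \<alpha> f) \<and>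
     ((\<forall>f\<in>F. kite_signed_area z f > 0) \<or> (\<forall>f\<in>F. kite_signed_area z f < 0)) \<and>
     (\<forall>x. interior_vertex F x \<longrightarrow>
        (\<exists>\<epsilon>>0. ball (z x) \<epsilon> \<subseteq> (\<Union>f\<in>faces_at F x. kite z f)))"

definition embedded :: "face set \<Rightarrow> (nat \<Rightarrow> complex) \<Rightarrow> bool" where
  "embedded F z \<longleftrightarrow>
     (\<forall>f\<in>F. \<forall>g\<in>F. f \<noteq> g \<longrightarrow>
        interior (kite z f) \<inter> interior (kite z g) = {} \<and>
        kite z f \<inter> kite z g = convex hull (z ` (face_verts f \<inter> face_verts g)))"

text \<open>Conductance of the edge [fw1 f, fw2 f] of G corresponding to face f.\<close>
definition conductance :: "(face \<Rightarrow> real) \<Rightarrow> (nat \<Rightarrow> real) \<Rightarrow> face \<Rightarrow> real" where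
  "conductance \<alpha> r f =
     sin (\<alpha> f) / (cosh (ln (r (fw2 f)) - ln (r (fw1 f))) - cos (\<alpha> f))"

end

theory Submission
  imports Defs
begin

text \<open>Fix an interior white vertex v with radius R. A face at v with neighbouring centre w
  (radius S) and intersection point b gives a triangle v b w with angle \<alpha> at b. By the law
  of cosines cosh (ln S - ln R) - cos \<alpha> = D^2 / (2 R S) with D = |v - w|, so the conductance
  is 2 R S sin \<alpha> / D^2. As \<alpha> \<ge> \<alpha>0, the centre v has distance D \<ge> R sin \<alpha>0 from w, and the
  conductance is at most 2 / sin \<alpha>0 times the sine of the angle of the triangle at v. Shrinking
  every such triangle to legs of a common length \<rho> at v turns these sines into areas, up to the
  factor \<rho>^2 / 2; the shrunk triangles lie in the kites, which have disjoint interiors, and in the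
  disc of radius \<rho> about v, so the sines sum to at most 2 pi and the conductances to at most
  4 pi / sin \<alpha>0.\<close>

lemma cross2_sq_add_inner_sq: "(cross2 a c)\<^sup>2 + (inner a c)\<^sup>2 = (cmod a * cmod c)\<^sup>2"
  unfolding cross2_def inner_complex_def power_mult_distrib cmod_power2
  by (simp add: algebra_simps power2_eq_square)

lemma cross2_scaleR: "cross2 (s *\<^sub>R a) (t *\<^sub>R b) = s * t * cross2 a b"
  by (simp add: cross2_def algebra_simps)

lemma angle_at_commute: "angle_at q a c = angle_at q c a"
  by (simp add: angle_at_def inner_commute mult.commute)

lemma
  fixes q a c :: complex
  assumes "a \<noteq> q" "c \<noteq> q"
  shows inner_eq_cos_angle_at:
      "inner (a - q) (c - q) = norm (a - q) * norm (c - q) * cos (angle_at q a c)"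
    and abs_cross2_eq_sin_angle_at:
      "\<bar>cross2 (a - q) (c - q)\<bar> = norm (a - q) * norm (c - q) * sin (angle_at q a c)"
proof -
  define n where "n = norm (a - q) * norm (c - q)"
  define t where "t = inner (a - q) (c - q) / n"
  have "n > 0" using assms by (simp add: n_def)
  have "\<bar>t\<bar> \<le> 1"
    using Cauchy_Schwarz_ineq2[of "a - q" "c - q"] \<open>n > 0\<close> by (simp add: t_def n_def abs_div)
  then have t: "-1 \<le> t" "t \<le> 1" by auto
  have angle: "angle_at q a c = arccos t" by (simp add: angle_at_def t_def n_def)
  show "inner (a - q) (c - q) = norm (a - q) * norm (c - q) * cos (angle_at q a c)"
    using \<open>n > 0\<close> unfolding angle cos_arccos[OF t] by (simp add: t_def flip: n_def)
  have "n\<^sup>2 * (1 - t\<^sup>2) = n\<^sup>2 - (inner (a - q) (c - q))\<^sup>2"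
    using \<open>n > 0\<close> by (simp add: t_def power_divide right_diff_distrib)
  then have "(cross2 (a - q) (c - q))\<^sup>2 = n\<^sup>2 * (1 - t\<^sup>2)"
    using cross2_sq_add_inner_sq[of "a - q" "c - q"] by (simp add: n_def)
  then have "\<bar>cross2 (a - q) (c - q)\<bar> = n * sqrt (1 - t\<^sup>2)"
    using \<open>n > 0\<close> by (metis real_sqrt_abs real_sqrt_mult abs_of_pos)
  then show "\<bar>cross2 (a - q) (c - q)\<bar> = norm (a - q) * norm (c - q) * sin (angle_at q a c)"
    by (simp add: angle sin_arccos t n_def)
qed

lemma dist_sq_law_of_cosines:
  fixes q a c :: complex
  assumes "a \<noteq> q" "c \<noteq> q"
  shows "(dist a c)\<^sup>2 = (dist q a)\<^sup>2 + (dist q c)\<^sup>2 - 2 * dist q a * dist q c * cos (angle_at q a c)"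
proof -
  have "(dist a c)\<^sup>2 = (norm ((c - q) - (a - q)))\<^sup>2" by (simp add: dist_norm norm_minus_commute)
  also have "\<dots> = (norm (a - q))\<^sup>2 + (norm (c - q))\<^sup>2 - 2 * inner (a - q) (c - q)"
    by (simp add: power2_norm_eq_inner inner_diff_left inner_diff_right inner_commute)
  finally show ?thesis
    using inner_eq_cos_angle_at[OF assms] by (simp add: dist_norm norm_minus_commute)
qed

lemma law_of_cosines_ge_sin:
  fixes R S D \<alpha> \<alpha>\<^sub>0 :: real
  assumes "0 \<le> \<alpha>\<^sub>0" "\<alpha>\<^sub>0 \<le> pi / 2" "\<alpha>\<^sub>0 \<le> \<alpha>" "\<alpha> < pi"
    and "0 \<le> R" "0 \<le> S" "0 \<le> D" and D: "D\<^sup>2 = R\<^sup>2 + S\<^sup>2 - 2 * R * S * cos \<alpha>"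
  shows "R * sin \<alpha>\<^sub>0 \<le> D"
proof -
  have "(R * sin \<alpha>\<^sub>0)\<^sup>2 \<le> D\<^sup>2"
  proof (cases "cos \<alpha> \<le> 0")
    case True
    have "(R * sin \<alpha>\<^sub>0)\<^sup>2 \<le> R\<^sup>2"
      using abs_sin_le_one[of \<alpha>\<^sub>0] \<open>0 \<le> R\<close>
      by (simp add: power_mult_distrib abs_square_le_1 mult_left_le)
    also have "\<dots> \<le> D\<^sup>2"
    proof -
      have "2 * R * S * cos \<alpha> \<le> 0"
        using assms True by (intro mult_nonneg_nonpos) auto
      then show ?thesis using D zero_le_power2[of S] by linarith
    qed
    finally show ?thesis .
  next
    case False
    have "\<alpha> < pi / 2"
    proof (rule ccontr)
      assume "\<not> \<alpha> < pi / 2"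
      then have "cos \<alpha> \<le> cos (pi / 2)" using assms by (intro cos_monotone_0_pi_le) auto
      then show False using False by simp
    qed
    then have "sin \<alpha>\<^sub>0 \<le> sin \<alpha>" using assms by (intro sin_monotone_2pi_le) auto
    moreover have "0 \<le> sin \<alpha>\<^sub>0" using assms by (intro sin_ge_zero) auto
    ultimately have "(R * sin \<alpha>\<^sub>0)\<^sup>2 \<le> (R * sin \<alpha>)\<^sup>2"
      using assms by (intro power_mono mult_left_mono) auto
    also have "\<dots> = D\<^sup>2 - (S - R * cos \<alpha>)\<^sup>2"
      using D by (simp add: power_mult_distrib sin_squared_eq power2_diff algebra_simps)
    finally show ?thesis using zero_le_power2[of "S - R * cos \<alpha>"] by linarith
  qed
  then show ?thesis using \<open>0 \<le> D\<close> by (rule power2_le_imp_le)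
qed

lemma cosh_ln_diff_minus_cos:
  fixes R S \<alpha> :: real
  assumes "0 < R" "0 < S"
  shows "cosh (ln S - ln R) - cos \<alpha> = (R\<^sup>2 + S\<^sup>2 - 2 * R * S * cos \<alpha>) / (2 * R * S)"
proof -
  have "cosh (ln S - ln R) = (S / R + R / S) / 2"
    using assms cosh_ln_real[of "S / R"] by (simp add: ln_div inverse_eq_divide)
  then show ?thesis using assms by (simp add: field_simps power2_eq_square)
qed

lemma sin_div_cosh_minus_cos_le:
  fixes R S D \<alpha> \<alpha>\<^sub>0 :: real
  assumes "0 < R" "0 < S" "0 < D" "0 < sin \<alpha>\<^sub>0" "R * sin \<alpha>\<^sub>0 \<le> D" "0 \<le> sin \<alpha>"
    and D: "D\<^sup>2 = R\<^sup>2 + S\<^sup>2 - 2 * R * S * cos \<alpha>"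
  shows "sin \<alpha> / (cosh (ln S - ln R) - cos \<alpha>) \<le> 2 * S * sin \<alpha> / (D * sin \<alpha>\<^sub>0)"
proof -
  have "sin \<alpha> / (cosh (ln S - ln R) - cos \<alpha>) = 2 * S * sin \<alpha> * R / D\<^sup>2"
    using assms by (simp add: cosh_ln_diff_minus_cos flip: D)
  also have "\<dots> \<le> 2 * S * sin \<alpha> * (D / sin \<alpha>\<^sub>0) / D\<^sup>2"
    using assms by (intro divide_right_mono mult_left_mono) (auto simp: field_simps)
  also have "\<dots> = 2 * S * sin \<alpha> / (D * sin \<alpha>\<^sub>0)"
    using \<open>0 < D\<close> \<open>0 < sin \<alpha>\<^sub>0\<close> by (simp add: power2_eq_square mult.commute mult.assoc)
  finally show ?thesis .
qed

text \<open>Areas of triangles are available for real^2 only, hence this transfer map.\<close>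

definition vec_of_complex :: "complex \<Rightarrow> real^2" where
  "vec_of_complex z = vector [Re z, Im z]"

lemma linear_vec_of_complex: "linear vec_of_complex"
  by (rule linearI) (auto simp: vec_of_complex_def vec_eq_iff forall_2)

lemma bij_vec_of_complex: "bij vec_of_complex"
proof (rule bijI)
  show "inj vec_of_complex"
    by (rule injI) (auto simp: vec_of_complex_def vec_eq_iff forall_2 complex_eq_iff)
  show "surj vec_of_complex"
  proof (rule surjI)
    fix x :: "real^2"
    show "vec_of_complex (Complex (x$1) (x$2)) = x"
      by (auto simp: vec_of_complex_def vec_eq_iff forall_2)
  qed
qed

lemma norm_vec_of_complex: "norm (vec_of_complex z) = cmod z"
  by (simp add: vec_of_complex_def norm_vec_def L2_set_def UNIV_2 cmod_def)

lemma measure_vec_of_complex_triangle: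
  "measure lebesgue (vec_of_complex ` (convex hull {a, b, c})) = \<bar>cross2 (b - a) (c - a)\<bar> / 2"
proof -
  have "vec_of_complex ` (convex hull {a, b, c}) =
        convex hull {vec_of_complex a, vec_of_complex b, vec_of_complex c}"
    by (simp add: convex_hull_linear_image[OF linear_vec_of_complex])
  moreover have "measure lebesgue (convex hull {vec_of_complex a, vec_of_complex b, vec_of_complex c}) =
                 measure lborel (convex hull {vec_of_complex a, vec_of_complex b, vec_of_complex c})"
    by (intro measure_completion)
       (auto intro!: borel_closed compact_imp_closed finite_imp_compact_convex_hull)
  ultimately show ?thesis
    by (simp add: content_triangle vec_of_complex_def cross2_def abs_minus_commute algebra_simps)
qed

lemma shrunk_triangle:
  fixes c p q :: complex
  assumes "0 < \<rho>" "\<rho> \<le> dist c p" "\<rho> \<le> dist c q"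
  defines "H \<equiv> convex hull {c, c + (\<rho> / dist c p) *\<^sub>R (p - c), c + (\<rho> / dist c q) *\<^sub>R (q - c)}"
  shows "H \<subseteq> convex hull {c, p, q}" "H \<subseteq> cball c \<rho>"
    and "measure lebesgue (vec_of_complex ` H) =
         \<rho>\<^sup>2 * \<bar>cross2 (p - c) (q - c)\<bar> / (2 * dist c p * dist c q)"
proof -
  have "c + (\<rho> / dist c x) *\<^sub>R (x - c) \<in> convex hull {c, p, q}"
    if "x \<in> {p, q}" "\<rho> \<le> dist c x" for x
  proof -
    have "(1 - \<rho> / dist c x) *\<^sub>R c + (\<rho> / dist c x) *\<^sub>R x \<in> convex hull {c, p, q}"
      using that \<open>0 < \<rho>\<close> by (intro convexD) (auto intro: hull_inc simp: divide_le_eq_1)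
    then show ?thesis by (simp add: algebra_simps)
  qed
  then show "H \<subseteq> convex hull {c, p, q}"
    unfolding H_def using assms by (intro hull_minimal) (auto intro: hull_inc)
  have "norm ((\<rho> / dist c x) *\<^sub>R (x - c)) = \<rho>" if "\<rho> \<le> dist c x" for x
    using that \<open>0 < \<rho>\<close> by (auto simp: dist_norm norm_minus_commute)
  then show "H \<subseteq> cball c \<rho>"
    unfolding H_def using assms
    by (intro hull_minimal) (auto simp: dist_norm)
  show "measure lebesgue (vec_of_complex ` H) =
        \<rho>\<^sup>2 * \<bar>cross2 (p - c) (q - c)\<bar> / (2 * dist c p * dist c q)"
    unfolding H_def measure_vec_of_complex_triangle
    using assms by (simp add: cross2_scaleR abs_mult power2_eq_square)
qed

lemma sum_measure_le_of_disjoint_interiors: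
  fixes T :: "'i \<Rightarrow> 'a::euclidean_space set"
  assumes "finite I" and convex: "\<And>i. i \<in> I \<Longrightarrow> convex (T i)"
    and disjoint: "\<And>i j. i \<in> I \<Longrightarrow> j \<in> I \<Longrightarrow> i \<noteq> j \<Longrightarrow> interior (T i) \<inter> interior (T j) = {}"
    and sub: "(\<Union>i\<in>I. T i) \<subseteq> S" and "bounded S" "S \<in> lmeasurable"
  shows "(\<Sum>i\<in>I. measure lebesgue (T i)) \<le> measure lebesgue S"
proof -
  have meas: "T i \<in> lmeasurable" if "i \<in> I" for i
  proof (rule measurable_convex)
    show "bounded (T i)" using sub that bounded_subset[OF \<open>bounded S\<close>] by blast
  qed (rule convex[OF that])
  have "negligible (T i \<inter> T j)" if "i \<in> I" "j \<in> I" "i \<noteq> j" for i j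
  proof (rule negligible_subset)
    show "negligible (frontier (T i) \<union> frontier (T j))"
      using that convex by (auto intro: negligible_convex_frontier)
    show "T i \<inter> T j \<subseteq> frontier (T i) \<union> frontier (T j)"
      using disjoint[OF that] closure_subset[of "T i"] closure_subset[of "T j"]
      by (auto simp: frontier_def)
  qed
  then have "(\<Sum>i\<in>I. measure lebesgue (T i)) = measure lebesgue (\<Union>i\<in>I. T i)"
    by (intro measure_negligible_finite_Union_image[symmetric])
       (auto simp: \<open>finite I\<close> meas pairwise_def)
  also have "\<dots> \<le> measure lebesgue S"
    using sub meas \<open>S \<in> lmeasurable\<close> \<open>finite I\<close> by (intro measure_mono_fmeasurable) auto
  finally show ?thesis .
qed

lemma sum_sin_angles_at_vertex_le:
  fixes c :: complex and p q :: "'i \<Rightarrow> complex"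
  assumes "finite I" and "\<And>i. i \<in> I \<Longrightarrow> p i \<noteq> c" "\<And>i. i \<in> I \<Longrightarrow> q i \<noteq> c"
    and disjoint: "\<And>i j. i \<in> I \<Longrightarrow> j \<in> I \<Longrightarrow> i \<noteq> j \<Longrightarrow>
      interior (convex hull {c, p i, q i}) \<inter> interior (convex hull {c, p j, q j}) = {}"
  shows "(\<Sum>i\<in>I. \<bar>cross2 (p i - c) (q i - c)\<bar> / (dist c (p i) * dist c (q i))) \<le> 2 * pi"
proof -
  define \<rho> where "\<rho> = Min (insert 1 ((\<lambda>i. min (dist c (p i)) (dist c (q i))) ` I))"
  have "0 < \<rho>" using assms by (auto simp: \<rho>_def)
  have \<rho>: "\<rho> \<le> dist c (p i)" "\<rho> \<le> dist c (q i)" if "i \<in> I" for i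
    using that \<open>finite I\<close> by (auto simp: \<rho>_def intro: Min.coboundedI[THEN order_trans])
  define H where "H i = convex hull
    {c, c + (\<rho> / dist c (p i)) *\<^sub>R (p i - c), c + (\<rho> / dist c (q i)) *\<^sub>R (q i - c)}" for i
  define T where "T i = vec_of_complex ` H i" for i
  have shrunk: "H i \<subseteq> convex hull {c, p i, q i}" "H i \<subseteq> cball c \<rho>"
    "measure lebesgue (T i) = \<rho>\<^sup>2 * \<bar>cross2 (p i - c) (q i - c)\<bar> / (2 * dist c (p i) * dist c (q i))"
    if "i \<in> I" for i
    unfolding T_def H_def using shrunk_triangle[OF \<open>0 < \<rho>\<close> \<rho>[OF that]] by simp_all
  have "(\<Sum>i\<in>I. measure lebesgue (T i)) \<le> measure lebesgue (cball (vec_of_complex c) \<rho>)"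
  proof (rule sum_measure_le_of_disjoint_interiors)
    show "convex (T i)" for i
      unfolding T_def H_def by (intro convex_linear_image linear_vec_of_complex convex_convex_hull)
    show "(\<Union>i\<in>I. T i) \<subseteq> cball (vec_of_complex c) \<rho>"
      using shrunk(2) by (fastforce simp: T_def dist_norm norm_vec_of_complex
                                 simp flip: linear_diff[OF linear_vec_of_complex])
    fix i j assume ij: "i \<in> I" "j \<in> I" "i \<noteq> j"
    have "interior (vec_of_complex ` A) = vec_of_complex ` interior A" for A
      by (rule interior_bijective_linear_image[OF linear_vec_of_complex bij_vec_of_complex])
    moreover have "interior (H i) \<inter> interior (H j) = {}"
      using disjoint[OF ij] interior_mono[OF shrunk(1)[OF ij(1)]] interior_mono[OF shrunk(1)[OF ij(2)]]
      by blast
    ultimately show "interior (T i) \<inter> interior (T j) = {}"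
      by (simp add: T_def image_Int[OF bij_is_inj[OF bij_vec_of_complex], symmetric])
  qed (use \<open>finite I\<close> in auto)
  also have "\<dots> = pi * \<rho>\<^sup>2"
    using \<open>0 < \<rho>\<close> content_cball[of \<rho> "vec_of_complex c"]
    by (simp add: unit_ball_vol_2 measure_completion)
  finally have "\<rho>\<^sup>2 / 2 * (\<Sum>i\<in>I. \<bar>cross2 (p i - c) (q i - c)\<bar> / (dist c (p i) * dist c (q i)))
      \<le> \<rho>\<^sup>2 / 2 * (2 * pi)"
    using shrunk(3) by (simp add: sum_distrib_left algebra_simps)
  then show ?thesis using \<open>0 < \<rho>\<close> by simp
qed

lemma finite_faces_at_interior_vertex: "interior_vertex F v \<Longrightarrow> finite (faces_at F v)"
  unfolding interior_vertex_def by (metis List.finite_set)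

lemma face_at_white_vertex:
  assumes "white_vertices F \<inter> black_vertices F = {}" "v \<in> white_vertices F" "f \<in> faces_at F v"
  shows "f \<in> F" "v = fw1 f \<or> v = fw2 f"
proof -
  show "f \<in> F" using assms(3) by (simp add: faces_at_def)
  then have "fb1 f \<in> black_vertices F" "fb2 f \<in> black_vertices F"
    by (auto simp: black_vertices_def)
  then show "v = fw1 f \<or> v = fw2 f"
    using assms by (auto simp: faces_at_def face_verts_def)
qed

definition opposite_white :: "face \<Rightarrow> nat \<Rightarrow> nat" where
  "opposite_white f v = (if fw1 f = v then fw2 f else fw1 f)"

lemma conductance_at_white_vertex:
  assumes "v = fw1 f \<or> v = fw2 f"
  shows "conductance \<alpha> r f = sin (\<alpha> f) / (cosh (ln (r (opposite_white f v)) - ln (r v)) - cos (\<alpha> f))"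
proof (cases "fw1 f = v")
  case False
  then have "ln (r (fw2 f)) - ln (r (fw1 f)) = - (ln (r (opposite_white f v)) - ln (r v))"
    using assms by (auto simp: opposite_white_def)
  then show ?thesis by (simp only: conductance_def cosh_minus)
qed (simp add: conductance_def opposite_white_def)

lemma circle_pattern_at_white_vertex:
  assumes "circle_pattern F \<alpha> r z" "f \<in> F" "v = fw1 f \<or> v = fw2 f"
  defines "w \<equiv> opposite_white f v"
  shows "dist (z (fb1 f)) (z v) = r v" "dist (z (fb1 f)) (z w) = r w"
    and "angle_at (z (fb1 f)) (z v) (z w) = \<alpha> f"
    and "0 < r v" "0 < r w"
proof -
  have "fw1 f \<in> white_vertices F" "fw2 f \<in> white_vertices F"
    using assms(2) by (auto simp: white_vertices_def)
  then show "0 < r v" "0 < r w"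
    using assms by (auto simp: circle_pattern_def opposite_white_def)
  show "dist (z (fb1 f)) (z v) = r v" "dist (z (fb1 f)) (z w) = r w"
    "angle_at (z (fb1 f)) (z v) (z w) = \<alpha> f"
    using assms by (auto simp: circle_pattern_def opposite_white_def angle_at_commute)
qed

lemma conductance_le_sin_angle:
  assumes cp: "circle_pattern F \<alpha> r z" and f: "f \<in> F" "v = fw1 f \<or> v = fw2 f"
    and \<alpha>\<^sub>0: "0 < \<alpha>\<^sub>0" "\<alpha>\<^sub>0 \<le> pi / 2" "\<alpha>\<^sub>0 \<le> \<alpha> f" "\<alpha> f < pi"
  defines "b \<equiv> z (fb1 f)" and "w \<equiv> opposite_white f v"
  shows "b \<noteq> z v" "z w \<noteq> z v"
    and "conductance \<alpha> r f \<le>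
           2 / sin \<alpha>\<^sub>0 * (\<bar>cross2 (b - z v) (z w - z v)\<bar> / (dist (z v) b * dist (z v) (z w)))"
proof -
  note face = circle_pattern_at_white_vertex[OF cp f, folded b_def w_def]
  define D where "D = dist (z v) (z w)"
  show "b \<noteq> z v" using face by auto
  have "z v \<noteq> b" "z w \<noteq> b" using face by auto
  note law = dist_sq_law_of_cosines[OF this]
  have "0 < sin \<alpha>\<^sub>0" using \<alpha>\<^sub>0 by (intro sin_gt_zero) auto
  have "0 \<le> sin (\<alpha> f)" using \<alpha>\<^sub>0 by (intro sin_ge_zero) auto
  have D: "D\<^sup>2 = (r v)\<^sup>2 + (r w)\<^sup>2 - 2 * r v * r w * cos (\<alpha> f)"
    using law face by (simp add: D_def dist_commute)
  have "r v * sin \<alpha>\<^sub>0 \<le> D"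
    using face \<alpha>\<^sub>0 by (intro law_of_cosines_ge_sin[OF _ _ _ _ _ _ _ D]) (auto simp: D_def)
  moreover have "0 < r v * sin \<alpha>\<^sub>0" using face \<open>0 < sin \<alpha>\<^sub>0\<close> by simp
  ultimately have "0 < D" by linarith
  then show "z w \<noteq> z v" by (auto simp: D_def)
  have "\<bar>cross2 (b - z v) (z w - z v)\<bar> = \<bar>cross2 (z v - b) (z w - b)\<bar>"
    by (simp add: cross2_def algebra_simps)
  also have "\<dots> = r v * r w * sin (\<alpha> f)"
    using abs_cross2_eq_sin_angle_at[OF \<open>z v \<noteq> b\<close> \<open>z w \<noteq> b\<close>] face
    by (simp add: dist_norm norm_minus_commute)
  finally have cross: "\<bar>cross2 (b - z v) (z w - z v)\<bar> = r v * r w * sin (\<alpha> f)" .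
  have "conductance \<alpha> r f \<le> 2 * r w * sin (\<alpha> f) / (D * sin \<alpha>\<^sub>0)"
    unfolding conductance_at_white_vertex[OF f(2)] w_def[symmetric]
    using face \<open>0 < D\<close> \<open>0 < sin \<alpha>\<^sub>0\<close> \<open>r v * sin \<alpha>\<^sub>0 \<le> D\<close> \<open>0 \<le> sin (\<alpha> f)\<close> D
    by (intro sin_div_cosh_minus_cos_le)
  also have "\<dots> = 2 / sin \<alpha>\<^sub>0 * (\<bar>cross2 (b - z v) (z w - z v)\<bar> / (dist (z v) b * D))"
    using face by (simp add: cross dist_commute mult.commute mult.assoc)
  finally show "conductance \<alpha> r f \<le>
      2 / sin \<alpha>\<^sub>0 * (\<bar>cross2 (b - z v) (z w - z v)\<bar> / (dist (z v) b * dist (z v) (z w)))"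
    by (simp add: D_def)
qed

lemma conductance_sum_le:
  assumes bipartite: "white_vertices F \<inter> black_vertices F = {}"
    and cp: "circle_pattern F \<alpha> r z" and emb: "embedded F z"
    and \<alpha>: "\<forall>f\<in>F. \<alpha>\<^sub>0 \<le> \<alpha> f \<and> \<alpha> f < pi" and \<alpha>\<^sub>0: "0 < \<alpha>\<^sub>0" "\<alpha>\<^sub>0 \<le> pi / 2"
    and v: "v \<in> white_vertices F" and fin: "finite (faces_at F v)"
  shows "(\<Sum>f\<in>faces_at F v. conductance \<alpha> r f) \<le> 4 * pi / sin \<alpha>\<^sub>0"
proof -
  define b where "b f = z (fb1 f)" for f
  define w where "w f = z (opposite_white f v)" for f
  define sin_at_v where
    "sin_at_v f = \<bar>cross2 (b f - z v) (w f - z v)\<bar> / (dist (z v) (b f) * dist (z v) (w f))" for f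
  note at = face_at_white_vertex[OF bipartite v]
  have bound: "b f \<noteq> z v" "w f \<noteq> z v" "conductance \<alpha> r f \<le> 2 / sin \<alpha>\<^sub>0 * sin_at_v f"
    if "f \<in> faces_at F v" for f
    using conductance_le_sin_angle[OF cp at[OF that] \<alpha>\<^sub>0] \<alpha> at(1)[OF that]
    by (simp_all add: b_def w_def sin_at_v_def)
  have "(\<Sum>f\<in>faces_at F v. conductance \<alpha> r f) \<le> (\<Sum>f\<in>faces_at F v. 2 / sin \<alpha>\<^sub>0 * sin_at_v f)"
    by (intro sum_mono bound)
  also have "\<dots> = 2 / sin \<alpha>\<^sub>0 * (\<Sum>f\<in>faces_at F v. sin_at_v f)"
    by (simp add: sum_distrib_left)
  also have "\<dots> \<le> 2 / sin \<alpha>\<^sub>0 * (2 * pi)"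
  proof (intro mult_left_mono)
    show "0 \<le> 2 / sin \<alpha>\<^sub>0" using \<alpha>\<^sub>0 by (simp add: sin_ge_zero)
    have kite: "convex hull {z v, b f, w f} \<subseteq> kite z f" if "f \<in> faces_at F v" for f
    proof -
      have "{z v, b f, w f} \<subseteq> {z (fw1 f), z (fb1 f), z (fw2 f)}"
        using at(2)[OF that] by (auto simp: b_def w_def opposite_white_def)
      then show ?thesis unfolding kite_def by (meson hull_mono le_supI1)
    qed
    show "(\<Sum>f\<in>faces_at F v. sin_at_v f) \<le> 2 * pi"
      unfolding sin_at_v_def
    proof (rule sum_sin_angles_at_vertex_le[OF fin])
      fix f g assume fg: "f \<in> faces_at F v" "g \<in> faces_at F v" "f \<noteq> g"
      then have "interior (kite z f) \<inter> interior (kite z g) = {}"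
        using emb at(1) by (simp add: embedded_def)
      then show "interior (convex hull {z v, b f, w f}) \<inter> interior (convex hull {z v, b g, w g}) = {}"
        using interior_mono[OF kite[OF fg(1)]] interior_mono[OF kite[OF fg(2)]] by blast
    qed (use bound in auto)
  qed
  finally show ?thesis by simp
qed

theorem lemma5p11:
  fixes \<alpha>\<^sub>0 :: real
  assumes "0 < \<alpha>\<^sub>0" and "\<alpha>\<^sub>0 \<le> pi / 2"
  shows "\<exists>C\<^sub>5. \<forall>F \<alpha> r z.
           b_quad_graph F \<longrightarrow> admissible F \<alpha> \<longrightarrow>
           (\<forall>f\<in>F. \<alpha>\<^sub>0 \<le> \<alpha> f \<and> \<alpha> f < pi) \<longrightarrow>
           circle_pattern F \<alpha> r z \<longrightarrow> embedded F z \<longrightarrow>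
           (\<forall>v\<in>white_vertices F. interior_vertex F v \<longrightarrow>
              (\<Sum>f\<in>faces_at F v. conductance \<alpha> r f) \<le> C\<^sub>5)"
proof (intro exI[of _ "4 * pi / sin \<alpha>\<^sub>0"] allI impI ballI)
  fix F \<alpha> r z v
  assume "b_quad_graph F" "\<forall>f\<in>F. \<alpha>\<^sub>0 \<le> \<alpha> f \<and> \<alpha> f < pi" "circle_pattern F \<alpha> r z"
    "embedded F z" "v \<in> white_vertices F" "interior_vertex F v"
  then show "(\<Sum>f\<in>faces_at F v. conductance \<alpha> r f) \<le> 4 * pi / sin \<alpha>\<^sub>0"
    using assms finite_faces_at_interior_vertex
    by (intro conductance_sum_le) (auto simp: b_quad_graph_def)
qed

end
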